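(* Let $k\ge2$ and $r\ge1$. Let $X$ be a mixed-stable sequence with respect to the $(k,r)$-tree $T_r$ that is a whole multiple of its atomic sequence. Then there is a BST $T'$ on the keys of $T_r$ such that the average promotion of $T_r$ to $T'$ with respect to $X$ is strictly larger than $k(1-\alpha^r)$, where $\alpha=1-3^{-k}$. If $X$ is strongly-stable, then there is a BST $T'$ on the keys of $T_r$ such that the average promotion of $T_r$ to $T'$ equals $(k+1)(1-\alpha^r)+\delta$, where $\alpha=1-2^{-k}$ and $0\le\delta<\alpha^r$.
   Context: $(k,r)$-trees. Let $k\ge2$ and $r\ge0$ be integers. $T_0$ is a single node. For $r\ge1$, $T_r$ has $k$ trunk nodes $w_1,\dots,w_k$: $w_1$ is the root, $w_2$ is the right child of $w_1$, and $w_{j+1}$ is the left child of $w_j$ for $2\le j\le k-1$. The left child of $w_k$ is a single leaf (the actual leaf). Each of the remaining $k$ child positions of trunk nodes (the left child of $w_1$ and the right child of $w_j$ for $2\le j\le k$) is the root of a copy of $T_{r-1}$. Keys are $1,\dots,|T_r|$ in symmetric order. Stable sequences. Let $T$ be a full binary search tree (every inner node has exactly two children), and let $X$ be a query sequence consisting only of keys stored at leaves of $T$. For an inner node $v$, let $X_v$ be the subsequence of $X$ consisting of the queries to keys in the subtree of $v$. - The node $v$ is strongly-stable if consecutive queries of $X_v$ alternate between the left and right subtrees of $v$. - The node $v$ is weakly-stable with a left bias if its left child $u$ is an inner node and $X_v$ repeats cyclically (from some starting phase) the pattern: a query in the left subtree of $u$, then one in the right subtree of $u$, then one in the right subtree of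 $v$. - Weakly-stable with a right bias is the mirror image: $u$ is the right child of $v$, and the pattern is right subtree of $u$, left subtree of $u$, left subtree of $v$. In both weakly-stable cases $u$ is called the favored child of $v$. $X$ (and $T$) is mixed-stable if every inner node of $T$ is strongly-stable or weakly-stable, and strongly-stable if every inner node is strongly-stable. The atomic sequence is the shortest such stable sequence all of whose repetitions are again such stable sequences. $X$ is a whole multiple of it if it is a concatenation of copies of it. For such $X$, $f(x)$ is the fraction of queries equal to $x$. Promotion. For BSTs $T,T'$ on the same keys and such $X$, the average promotion of $T$ to $T'$ is $\sum_x f(x)\,(d_T(x)-d_{T'}(x))$, where $d_T(x)$ is the number of edges from the root of $T$ to $x$. *)

theory Defs
  imports Complex_Main "HOL-Library.Tree"
begin

text \<open>Shape of the trunk below w_1: trunk m s builds w_2 ... w_k when m = k - 1;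
  trunk 0 s is the single actual leaf (left child of w_k); every trunk node has s
  (a copy of T_(r-1)) as right child.\<close>
fun trunk :: "nat \<Rightarrow> unit tree \<Rightarrow> unit tree" where
  "trunk 0 s = Node Leaf () Leaf"
| "trunk (Suc m) s = Node (trunk m s) () s"

fun kr_shape :: "nat \<Rightarrow> nat \<Rightarrow> unit tree" where
  "kr_shape k 0 = Node Leaf () Leaf"
| "kr_shape k (Suc r) = Node (kr_shape k r) () (trunk (k - 1) (kr_shape k r))"

fun label :: "nat \<Rightarrow> 'a tree \<Rightarrow> nat tree" where
  "label n Leaf = Leaf"
| "label n (Node l _ r) = Node (label n l) (n + size l) (label (n + size l + 1) r)"

definition kr_tree :: "nat \<Rightarrow> nat \<Rightarrow> nat tree" where
  "kr_tree k r = label 1 (kr_shape k r)"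

fun leaf_keys :: "'a tree \<Rightarrow> 'a set" where
  "leaf_keys Leaf = {}"
| "leaf_keys (Node l a r) = (if l = Leaf \<and> r = Leaf then {a} else leaf_keys l \<union> leaf_keys r)"

definition inner :: "'a tree \<Rightarrow> bool" where
  "inner t \<longleftrightarrow> t \<noteq> Leaf \<and> (left t \<noteq> Leaf \<or> right t \<noteq> Leaf)"

fun depth :: "'a::linorder tree \<Rightarrow> 'a \<Rightarrow> nat" where
  "depth Leaf x = 0"
| "depth (Node l a r) x =
     (if x = a then 0 else if x < a then Suc (depth l x) else Suc (depth r x))"

definition subseq_at :: "'a tree \<Rightarrow> 'a list \<Rightarrow> 'a list" where
  "subseq_at v X = filter (\<lambda>x. x \<in> set_tree v) X"

definition strongly_stable_node :: "'a tree \<Rightarrow> 'a list \<Rightarrow> bool" where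
  "strongly_stable_node v X \<longleftrightarrow>
     (let Xv = subseq_at v X in
      \<forall>i. Suc i < length Xv \<longrightarrow>
        (Xv ! i \<in> set_tree (left v) \<and> Xv ! Suc i \<in> set_tree (right v)) \<or>
        (Xv ! i \<in> set_tree (right v) \<and> Xv ! Suc i \<in> set_tree (left v)))"

definition cyclic3 :: "'a list \<Rightarrow> 'a set \<Rightarrow> 'a set \<Rightarrow> 'a set \<Rightarrow> bool" where
  "cyclic3 Xs A0 A1 A2 \<longleftrightarrow>
     (\<exists>p. \<forall>i < length Xs. Xs ! i \<in> [A0, A1, A2] ! ((i + p) mod 3))"

definition weakly_stable_left_node :: "'a tree \<Rightarrow> 'a list \<Rightarrow> bool" where
  "weakly_stable_left_node v X \<longleftrightarrow>
     inner (left v) \<and>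
     cyclic3 (subseq_at v X) (set_tree (left (left v))) (set_tree (right (left v)))
       (set_tree (right v))"

definition weakly_stable_right_node :: "'a tree \<Rightarrow> 'a list \<Rightarrow> bool" where
  "weakly_stable_right_node v X \<longleftrightarrow>
     inner (right v) \<and>
     cyclic3 (subseq_at v X) (set_tree (right (right v))) (set_tree (left (right v)))
       (set_tree (left v))"

definition weakly_stable_node :: "'a tree \<Rightarrow> 'a list \<Rightarrow> bool" where
  "weakly_stable_node v X \<longleftrightarrow> weakly_stable_left_node v X \<or> weakly_stable_right_node v X"

definition mixed_stable :: "'a tree \<Rightarrow> 'a list \<Rightarrow> bool" where
  "mixed_stable T X \<longleftrightarrow> set X \<subseteq> leaf_keys T \<and>
     (\<forall>v \<in> subtrees T. inner v \<longrightarrow> strongly_stable_node v X \<or> weakly_stable_node v X)"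

definition strongly_stable :: "'a tree \<Rightarrow> 'a list \<Rightarrow> bool" where
  "strongly_stable T X \<longleftrightarrow> set X \<subseteq> leaf_keys T \<and>
     (\<forall>v \<in> subtrees T. inner v \<longrightarrow> strongly_stable_node v X)"

abbreviation rep :: "nat \<Rightarrow> 'a list \<Rightarrow> 'a list" where
  "rep m A \<equiv> concat (replicate m A)"

definition is_atomic :: "('a list \<Rightarrow> bool) \<Rightarrow> 'a list \<Rightarrow> 'a list \<Rightarrow> bool" where
  "is_atomic P X A \<longleftrightarrow>
     A \<noteq> [] \<and> (\<forall>j\<ge>1. P (rep j A)) \<and> (\<exists>j. (\<exists>Y. X @ Y = rep j A)) \<and>
     (\<forall>B. B \<noteq> [] \<and> (\<forall>j\<ge>1. P (rep j B)) \<and> (\<exists>j. (\<exists>Y. X @ Y = rep j B))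
          \<longrightarrow> length A \<le> length B)"

definition whole_multiple_of_atomic :: "('a list \<Rightarrow> bool) \<Rightarrow> 'a list \<Rightarrow> bool" where
  "whole_multiple_of_atomic P X \<longleftrightarrow>
     (\<exists>A m. m \<ge> 1 \<and> is_atomic P X A \<and> X = rep m A)"

definition freq :: "'a list \<Rightarrow> 'a \<Rightarrow> real" where
  "freq X x = real (count_list X x) / real (length X)"

definition avg_promotion :: "'a::linorder tree \<Rightarrow> 'a tree \<Rightarrow> 'a list \<Rightarrow> real" where
  "avg_promotion T T' X =
     (\<Sum>x \<in> set_tree T. freq X x * (real (depth T x) - real (depth T' x)))"

end

theory Submission
  imports Defs
begin

text \<open>
  Rearrange \<open>T\<^sub>r\<close> recursively: the actual leaf becomes the root, the old root \<open>w\<^sub>1\<close> is hung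
  below the left copy of \<open>T\<^sub>r\<^sub>-\<^sub>1\<close> as its new maximum, \<open>w\<^sub>k\<close> below its right copy as its new
  minimum, and the copies of \<open>T\<^sub>r\<^sub>-\<^sub>1\<close> are rearranged in the same way. No inner node is ever
  queried, so the gain in weighted depth is \<open>k\<close> times the weight of the actual leaf, plus the
  weight of the copy below \<open>w\<^sub>k\<close> (which moves up one level), plus the gains inside the \<open>k\<close>
  copies.

  Repeating a stable sequence six times keeps it stable, and a period-2 or period-3 pattern on
  a sequence whose length is a multiple of 6 splits it in exact proportions. Hence at every node
  the two sides carry weights in ratio 1:1 (strongly-stable) or 1:1, 1:2, 2:1 (mixed-stable).
  Along the trunk this forces the actual leaf to carry at least a \<open>3\<^sup>-\<^sup>k\<close> fraction of the weight,
  and exactly a \<open>2\<^sup>-\<^sup>k\<close> fraction in the strongly-stable case, where the lifted copy weighs as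
  much as the leaf. Induction on \<open>r\<close> then yields the bound \<open>k(1 - \<alpha>\<^sup>r)\<close>, strict because the
  lifted copy is nonempty, and the exact value \<open>(k + 1)(1 - \<alpha>\<^sup>r)\<close>, i.e. \<open>\<delta> = 0\<close>.
\<close>

fun weight :: "('a \<Rightarrow> nat) \<Rightarrow> 'a tree \<Rightarrow> nat" where
  "weight c Leaf = 0"
| "weight c (Node l a r) = weight c l + c a + weight c r"

fun weighted_depth :: "('a \<Rightarrow> nat) \<Rightarrow> 'a tree \<Rightarrow> nat" where
  "weighted_depth c Leaf = 0"
| "weighted_depth c (Node l a r) =
     weighted_depth c l + weight c l + weighted_depth c r + weight c r"

lemma weight_eq_sum_list: "weight c t = sum_list (map c (inorder t))"
  by (induction t) auto

lemma weight_eq_sum: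
  fixes t :: "'a::linorder tree"
  assumes "bst t"
  shows "weight c t = (\<Sum>x\<in>set_tree t. c x)"
proof -
  have "distinct (inorder t)"
    using assms by (simp add: bst_iff_sorted_wrt_less strict_sorted_iff)
  thus ?thesis by (simp add: weight_eq_sum_list sum_list_distinct_conv_sum_set)
qed

lemma weighted_depth_eq_sum:
  fixes t :: "'a::linorder tree"
  shows "bst t \<Longrightarrow> weighted_depth c t = (\<Sum>x\<in>set_tree t. c x * depth t x)"
proof (induction t)
  case Leaf
  show ?case by simp
next
  case (Node l a r)
  let ?t = "Node l a r"
  have disj: "set_tree l \<inter> set_tree r = {}" "a \<notin> set_tree l" "a \<notin> set_tree r"
    using Node.prems by fastforce+
  have "(\<Sum>x\<in>set_tree ?t. c x * depth ?t x)
      = c a * depth ?t a + ((\<Sum>x\<in>set_tree l. c x * depth ?t x) + (\<Sum>x\<in>set_tree r. c x * depth ?t x))"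
    using disj by (simp add: sum.union_disjoint del: depth.simps)
  also have "(\<Sum>x\<in>set_tree l. c x * depth ?t x) = (\<Sum>x\<in>set_tree l. c x * depth l x + c x)"
    using Node.prems by (intro sum.cong) auto
  also have "(\<Sum>x\<in>set_tree r. c x * depth ?t x) = (\<Sum>x\<in>set_tree r. c x * depth r x + c x)"
    using Node.prems by (intro sum.cong) auto
  finally show ?case
    using Node weight_eq_sum[of l c] weight_eq_sum[of r c] by (simp add: sum.distrib)
qed

fun insert_rightmost :: "'a tree \<Rightarrow> 'a \<Rightarrow> 'a tree" where
  "insert_rightmost Leaf x = Node Leaf x Leaf"
| "insert_rightmost (Node l a r) x = Node l a (insert_rightmost r x)"

fun insert_leftmost :: "'a \<Rightarrow> 'a tree \<Rightarrow> 'a tree" where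
  "insert_leftmost x Leaf = Node Leaf x Leaf"
| "insert_leftmost x (Node l a r) = Node (insert_leftmost x l) a r"

lemma inorder_insert_rightmost [simp]: "inorder (insert_rightmost t x) = inorder t @ [x]"
  by (induction t) auto

lemma inorder_insert_leftmost [simp]: "inorder (insert_leftmost x t) = x # inorder t"
  by (induction t) auto

lemma weighted_depth_insert_rightmost:
  "c x = 0 \<Longrightarrow> weighted_depth c (insert_rightmost t x) = weighted_depth c t"
  by (induction t) (auto simp: weight_eq_sum_list)

lemma weighted_depth_insert_leftmost:
  "c x = 0 \<Longrightarrow> weighted_depth c (insert_leftmost x t) = weighted_depth c t"
  by (induction t) (auto simp: weight_eq_sum_list)

section \<open>The (k,r)-tree and its rearrangement\<close>

lemma ge_two_SucSucE:
  assumes "k \<ge> (2::nat)"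
  obtains m where "k = Suc (Suc m)"
  using assms by (metis add_2_eq_Suc le_Suc_ex)

lemma upt_append_upt: "i \<le> j \<Longrightarrow> j \<le> l \<Longrightarrow> [i..<j] @ [j..<l] = [i..<l]"
  using upt_add_eq_append[of i j "l - j"] by simp

lemma inorder_label: "inorder (label n t) = [n..<n + size t]"
proof (induction t arbitrary: n)
  case Leaf
  show ?case by simp
next
  case (Node l a r)
  have "[n..<n + size l + (1 + size r)] = [n..<n + size l] @ [n + size l..<n + size l + (1 + size r)]"
    by (rule upt_append_upt[symmetric]) simp_all
  also have "[n + size l..<n + size l + (1 + size r)]
      = (n + size l) # [n + size l + 1..<n + size l + 1 + size r]"
    by (subst upt_conv_Cons) auto
  finally show ?case using Node by (simp add: add.assoc)
qed

abbreviation kr_size :: "nat \<Rightarrow> nat \<Rightarrow> nat" where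
  "kr_size k r \<equiv> size (kr_shape k r)"

definition kr_tree_at :: "nat \<Rightarrow> nat \<Rightarrow> nat \<Rightarrow> nat tree" where
  "kr_tree_at k r n = label n (kr_shape k r)"

definition trunk_at :: "nat \<Rightarrow> nat \<Rightarrow> nat \<Rightarrow> nat \<Rightarrow> nat tree" where
  "trunk_at k r m n = label n (trunk m (kr_shape k r))"

text \<open>The \<open>i\<close>-th copy of \<open>T\<^sub>r\<^sub>-\<^sub>1\<close> on a trunk (counted from the bottom, starting at 0) has
  smallest key \<open>copy_offset k r n i\<close>, where \<open>n\<close> is the key of the actual leaf.\<close>

definition copy_offset :: "nat \<Rightarrow> nat \<Rightarrow> nat \<Rightarrow> nat \<Rightarrow> nat" where
  "copy_offset k r n i = n + i * (kr_size k r + 1) + 2"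

lemma size_trunk: "size (trunk m s) = m * (size s + 1) + 1"
  by (induction m) auto

lemma kr_size_Suc: "kr_size k (Suc r) = kr_size k r + 1 + (k - 1) * (kr_size k r + 1) + 1"
  by (simp add: size_trunk)

lemma kr_tree_at_0: "kr_tree_at k 0 n = Node Leaf n Leaf"
  by (simp add: kr_tree_at_def)

lemma kr_tree_at_Suc:
  "kr_tree_at k (Suc r) n =
     Node (kr_tree_at k r n) (n + kr_size k r) (trunk_at k r (k - 1) (n + kr_size k r + 1))"
  by (simp add: kr_tree_at_def trunk_at_def)

lemma trunk_at_0: "trunk_at k r 0 n = Node Leaf n Leaf"
  by (simp add: trunk_at_def)

lemma trunk_at_Suc:
  "trunk_at k r (Suc m) n =
     Node (trunk_at k r m n) (n + m * (kr_size k r + 1) + 1) (kr_tree_at k r (copy_offset k r n m))"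
  by (simp add: kr_tree_at_def trunk_at_def copy_offset_def size_trunk)

lemma inorder_kr_tree_at: "inorder (kr_tree_at k r n) = [n..<n + kr_size k r]"
  by (simp add: kr_tree_at_def inorder_label)

lemma inorder_trunk_at: "inorder (trunk_at k r m n) = [n..<n + m * (kr_size k r + 1) + 1]"
  by (simp add: trunk_at_def inorder_label size_trunk)

lemma bst_kr_tree_at: "bst (kr_tree_at k r n)"
  by (simp add: bst_iff_sorted_wrt_less inorder_kr_tree_at)

lemma kr_tree_at_neq_Leaf: "kr_tree_at k r n \<noteq> Leaf"
  by (cases r) (auto simp: kr_tree_at_0 kr_tree_at_Suc)

lemma trunk_at_neq_Leaf: "trunk_at k r m n \<noteq> Leaf"
  by (cases m) (auto simp: trunk_at_0 trunk_at_Suc)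

text \<open>\<open>promoted_trunk f s m n\<close> rearranges \<open>trunk_at k r m n\<close> without its actual leaf \<open>n\<close>, which
  becomes the root of \<open>promoted\<close>; \<open>f j\<close> is the rearranged copy with smallest key \<open>j\<close> and \<open>s\<close> its size.\<close>

fun promoted_trunk :: "(nat \<Rightarrow> nat tree) \<Rightarrow> nat \<Rightarrow> nat \<Rightarrow> nat \<Rightarrow> nat tree" where
  "promoted_trunk f s 0 n = Leaf"
| "promoted_trunk f s (Suc 0) n = insert_leftmost (n + 1) (f (n + 2))"
| "promoted_trunk f s (Suc (Suc m)) n =
     Node (promoted_trunk f s (Suc m) n) (n + Suc m * (s + 1) + 1) (f (n + Suc m * (s + 1) + 2))"

primrec promoted :: "nat \<Rightarrow> nat \<Rightarrow> nat \<Rightarrow> nat tree" where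
  "promoted k 0 n = Node Leaf n Leaf"
| "promoted k (Suc r) n =
     Node (insert_rightmost (promoted k r n) (n + kr_size k r)) (n + kr_size k r + 1)
       (promoted_trunk (promoted k r) (kr_size k r) (k - 1) (n + kr_size k r + 1))"

lemma inorder_promoted_trunk:
  assumes "\<And>j. inorder (f j) = [j..<j + s]"
  shows "inorder (promoted_trunk f s (Suc m) n) = [n + 1..<n + Suc m * (s + 1) + 1]"
proof (induction m)
  case 0
  show ?case using assms by (simp add: upt_conv_Cons)
next
  case (Suc m)
  let ?j = "n + Suc m * (s + 1) + 1"
  have "[n + 1..<n + Suc (Suc m) * (s + 1) + 1] = [n + 1..<?j] @ [?j..<n + Suc (Suc m) * (s + 1) + 1]"
    by (rule upt_append_upt[symmetric]) auto
  also have "[?j..<n + Suc (Suc m) * (s + 1) + 1] = ?j # [?j + 1..<?j + 1 + s]"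
    by (subst upt_conv_Cons) (auto simp: algebra_simps)
  finally show ?case using Suc assms by simp
qed

lemma inorder_promoted: "k \<ge> 2 \<Longrightarrow> inorder (promoted k r n) = [n..<n + kr_size k r]"
proof (induction r arbitrary: n)
  case 0
  show ?case by simp
next
  case (Suc r)
  let ?s = "kr_size k r"
  obtain m where m: "k - 1 = Suc m" using Suc.prems by (cases "k - 1") auto
  have copies: "\<And>j. inorder (promoted k r j) = [j..<j + ?s]" using Suc by simp
  have "[n..<n + kr_size k (Suc r)] = [n..<n + ?s] @ [n + ?s..<n + kr_size k (Suc r)]"
    by (rule upt_append_upt[symmetric]) auto
  also have "[n + ?s..<n + kr_size k (Suc r)]
      = (n + ?s) # (n + ?s + 1) # [n + ?s + 2..<n + ?s + 1 + Suc m * (?s + 1) + 1]"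
    unfolding kr_size_Suc m by (simp add: upt_conv_Cons algebra_simps del: upt_Suc)
  finally show ?case
    using copies inorder_promoted_trunk[OF copies, of m "n + ?s + 1"] m
    by (simp add: add.assoc del: upt_Suc)
qed

lemma bst_promoted: "k \<ge> 2 \<Longrightarrow> bst (promoted k r n)"
  by (simp add: bst_iff_sorted_wrt_less inorder_promoted)

lemma set_promoted: "k \<ge> 2 \<Longrightarrow> set_tree (promoted k r n) = set_tree (kr_tree_at k r n)"
  by (simp flip: set_inorder add: inorder_promoted inorder_kr_tree_at)

lemma weight_promoted: "k \<ge> 2 \<Longrightarrow> weight c (promoted k r n) = weight c (kr_tree_at k r n)"
  by (simp add: weight_eq_sum_list inorder_promoted inorder_kr_tree_at)

lemma weight_trunk_at_promoted_trunk:
  assumes "k \<ge> 2"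
  shows "weight c (trunk_at k r (Suc m) n)
       = c n + weight c (promoted_trunk (promoted k r) (kr_size k r) (Suc m) n)"
proof -
  have "\<And>j. inorder (promoted k r j) = [j..<j + kr_size k r]"
    using inorder_promoted[OF assms] by simp
  from inorder_promoted_trunk[OF this] show ?thesis
    unfolding weight_eq_sum_list inorder_trunk_at
    by (subst upt_conv_Cons) (auto simp del: upt_Suc)
qed

section \<open>The gain recursion\<close>

definition gain :: "nat \<Rightarrow> (nat \<Rightarrow> nat) \<Rightarrow> nat \<Rightarrow> nat \<Rightarrow> real" where
  "gain k c r n =
     real (weighted_depth c (kr_tree_at k r n)) - real (weighted_depth c (promoted k r n))"

definition trunk_gain :: "nat \<Rightarrow> (nat \<Rightarrow> nat) \<Rightarrow> nat \<Rightarrow> nat \<Rightarrow> nat \<Rightarrow> real" where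
  "trunk_gain k c r m n =
     real (weighted_depth c (trunk_at k r m n))
     - real (weighted_depth c (promoted_trunk (promoted k r) (kr_size k r) m n))"

lemma gain_0: "gain k c 0 n = 0"
  by (simp add: gain_def kr_tree_at_0)

lemma trunk_gain_1:
  assumes "k \<ge> 2" "c (n + 1) = 0"
  shows "trunk_gain k c r 1 n
       = c n + weight c (kr_tree_at k r (copy_offset k r n 0)) + gain k c r (copy_offset k r n 0)"
  using assms trunk_at_Suc[of k r 0 n]
  by (simp add: trunk_gain_def gain_def trunk_at_0 copy_offset_def weighted_depth_insert_leftmost
      weight_promoted)

lemma trunk_gain_Suc_Suc:
  assumes "k \<ge> 2"
  shows "trunk_gain k c r (Suc (Suc m)) n
       = trunk_gain k c r (Suc m) n + c n + gain k c r (copy_offset k r n (Suc m))"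
  using trunk_at_Suc[of k r "Suc m" n] weight_trunk_at_promoted_trunk[OF assms, of c r m n]
    weight_promoted[OF assms, of c r "copy_offset k r n (Suc m)"]
  by (simp add: trunk_gain_def gain_def copy_offset_def)

lemma trunk_gain_eq:
  assumes "k \<ge> 2" "c (n + 1) = 0"
  shows "trunk_gain k c r (Suc m) n
       = Suc m * c n + weight c (kr_tree_at k r (copy_offset k r n 0))
         + (\<Sum>i\<le>m. gain k c r (copy_offset k r n i))"
proof (induction m)
  case 0
  show ?case using trunk_gain_1[where c = c and n = n, OF assms] by simp
next
  case (Suc m)
  show ?case using trunk_gain_Suc_Suc[OF assms(1), of c r m n] Suc by (simp add: algebra_simps)
qed

lemma gain_Suc:
  assumes "k \<ge> 2" "c (n + kr_size k r) = 0"
  shows "gain k c (Suc r) n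
       = gain k c r n + trunk_gain k c r (k - 1) (n + kr_size k r + 1) + c (n + kr_size k r + 1)"
proof -
  obtain m where m: "k = Suc (Suc m)" using assms(1) by (rule ge_two_SucSucE)
  let ?hung = "insert_rightmost (promoted k r n) (n + kr_size k r)"
  have "weight c ?hung = weight c (kr_tree_at k r n)"
    using assms weight_promoted by (simp add: weight_eq_sum_list)
  moreover have "weighted_depth c ?hung = weighted_depth c (promoted k r n)"
    using weighted_depth_insert_rightmost assms(2) .
  ultimately show ?thesis
    using weight_trunk_at_promoted_trunk[OF assms(1), of c r m "n + kr_size k r + 1"]
    by (simp add: gain_def trunk_gain_def kr_tree_at_Suc m)
qed

fun balanced :: "(nat \<Rightarrow> nat \<Rightarrow> bool) \<Rightarrow> ('a \<Rightarrow> nat) \<Rightarrow> 'a tree \<Rightarrow> bool" where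
  "balanced R c Leaf = True"
| "balanced R c (Node l a r) =
     (balanced R c l \<and> balanced R c r \<and>
      (l \<noteq> Leaf \<or> r \<noteq> Leaf \<longrightarrow> c a = 0 \<and> R (weight c l) (weight c r)))"

lemma balanced_iff_inner_subtrees:
  "balanced R c t \<longleftrightarrow>
     (\<forall>v\<in>subtrees t. inner v \<longrightarrow> c (value v) = 0 \<and> R (weight c (left v)) (weight c (right v)))"
proof (induction t)
  case (Node l a r)
  thus ?case by (simp add: inner_def) blast
qed (simp add: inner_def)

definition within_factor_two :: "nat \<Rightarrow> nat \<Rightarrow> bool" where
  "within_factor_two a b \<longleftrightarrow> a \<le> 2 * b \<and> b \<le> 2 * a"

lemma balanced_trunk_at_bottom:
  "balanced R c (trunk_at k r (Suc m) n) \<Longrightarrow>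
     c (n + 1) = 0 \<and> R (c n) (weight c (kr_tree_at k r (copy_offset k r n 0)))"
  by (induction m) (auto simp: trunk_at_Suc trunk_at_0 kr_tree_at_neq_Leaf)

lemma balanced_trunk_at_copies:
  "balanced R c (trunk_at k r (Suc m) n) \<Longrightarrow> i \<le> m \<Longrightarrow>
     balanced R c (kr_tree_at k r (copy_offset k r n i))"
  by (induction m) (auto simp: trunk_at_Suc le_Suc_eq)

lemma weight_balanced_trunk_at:
  "balanced R c (trunk_at k r (Suc m) n) \<Longrightarrow>
     weight c (trunk_at k r (Suc m) n)
       = c n + (\<Sum>i\<le>m. weight c (kr_tree_at k r (copy_offset k r n i)))"
  by (induction m) (auto simp: trunk_at_Suc trunk_at_0 kr_tree_at_neq_Leaf trunk_at_neq_Leaf)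

lemma weight_trunk_at_le:
  "balanced within_factor_two c (trunk_at k r (Suc m) n) \<Longrightarrow>
     weight c (trunk_at k r (Suc m) n) \<le> 3 ^ Suc m * c n"
proof (induction m)
  case 0
  thus ?case by (auto simp: trunk_at_Suc trunk_at_0 within_factor_two_def)
next
  case (Suc m)
  let ?w = "weight c (trunk_at k r (Suc m) n)"
  have "weight c (trunk_at k r (Suc (Suc m)) n) \<le> 3 * ?w"
    using Suc.prems by (auto simp: trunk_at_Suc [of _ _ "Suc m"] within_factor_two_def trunk_at_neq_Leaf)
  also have "\<dots> \<le> 3 ^ Suc (Suc m) * c n"
    using Suc by (simp add: trunk_at_Suc [of _ _ "Suc m"] mult_ac)
  finally show ?case .
qed

lemma weight_trunk_at_eq:
  "balanced (=) c (trunk_at k r (Suc m) n) \<Longrightarrow> weight c (trunk_at k r (Suc m) n) = 2 ^ Suc m * c n"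
  by (induction m) (auto simp: trunk_at_Suc trunk_at_0 trunk_at_neq_Leaf mult_ac)

context
  fixes k m r n :: nat and R :: "nat \<Rightarrow> nat \<Rightarrow> bool" and c :: "nat \<Rightarrow> nat"
  assumes k: "k = Suc (Suc m)" and bal: "balanced R c (kr_tree_at k (Suc r) n)"
begin

abbreviation (input) trunk_base :: nat where
  "trunk_base \<equiv> n + kr_size k r + 1"

lemma balanced_kr_tree_at_Suc_parts:
  "c (n + kr_size k r) = 0"
  "R (weight c (kr_tree_at k r n)) (weight c (trunk_at k r (Suc m) trunk_base))"
  "balanced R c (kr_tree_at k r n)"
  "balanced R c (trunk_at k r (Suc m) trunk_base)"
  using bal by (simp_all add: kr_tree_at_Suc k kr_tree_at_neq_Leaf)

lemma balanced_kr_tree_at_Suc_copies: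
  "i \<le> m \<Longrightarrow> balanced R c (kr_tree_at k r (copy_offset k r trunk_base i))"
  using balanced_trunk_at_copies balanced_kr_tree_at_Suc_parts(4) by blast

lemma weight_kr_tree_at_Suc:
  "weight c (kr_tree_at k (Suc r) n)
     = weight c (kr_tree_at k r n) + c trunk_base
       + (\<Sum>i\<le>m. weight c (kr_tree_at k r (copy_offset k r trunk_base i)))"
  using balanced_kr_tree_at_Suc_parts(1) weight_balanced_trunk_at[OF balanced_kr_tree_at_Suc_parts(4)]
  by (simp add: kr_tree_at_Suc k)

lemma gain_kr_tree_at_Suc:
  "gain k c (Suc r) n
     = gain k c r n + k * c trunk_base + weight c (kr_tree_at k r (copy_offset k r trunk_base 0))
       + (\<Sum>i\<le>m. gain k c r (copy_offset k r trunk_base i))"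
proof -
  have "k \<ge> 2" using k by simp
  moreover have "c (trunk_base + 1) = 0"
    using balanced_trunk_at_bottom[OF balanced_kr_tree_at_Suc_parts(4)] by simp
  ultimately show ?thesis
    using gain_Suc[where c = c and n = n, OF \<open>k \<ge> 2\<close> balanced_kr_tree_at_Suc_parts(1)]
      trunk_gain_eq[of k c trunk_base r m]
    by (simp add: k algebra_simps)
qed

lemma gain_kr_tree_at_Suc_ge:
  fixes \<beta> :: real
  assumes IH: "\<And>j. balanced R c (kr_tree_at k r j) \<Longrightarrow>
                 \<beta> * weight c (kr_tree_at k r j) \<le> gain k c r j"
  shows "k * c trunk_base + weight c (kr_tree_at k r (copy_offset k r trunk_base 0))
           + \<beta> * (weight c (kr_tree_at k (Suc r) n) - real (c trunk_base))
         \<le> gain k c (Suc r) n"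
proof -
  have "(\<Sum>i\<le>m. \<beta> * weight c (kr_tree_at k r (copy_offset k r trunk_base i)))
      \<le> (\<Sum>i\<le>m. gain k c r (copy_offset k r trunk_base i))"
    by (intro sum_mono IH balanced_kr_tree_at_Suc_copies) simp
  thus ?thesis
    using IH[OF balanced_kr_tree_at_Suc_parts(3)]
    unfolding gain_kr_tree_at_Suc weight_kr_tree_at_Suc
    by (simp add: algebra_simps sum_distrib_left)
qed

lemma gain_kr_tree_at_Suc_eq:
  fixes \<beta> :: real
  assumes IH: "\<And>j. balanced R c (kr_tree_at k r j) \<Longrightarrow>
                 gain k c r j = \<beta> * weight c (kr_tree_at k r j)"
  shows "gain k c (Suc r) n
     = k * c trunk_base + weight c (kr_tree_at k r (copy_offset k r trunk_base 0))
       + \<beta> * (weight c (kr_tree_at k (Suc r) n) - real (c trunk_base))"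
proof -
  have "(\<Sum>i\<le>m. gain k c r (copy_offset k r trunk_base i))
      = (\<Sum>i\<le>m. \<beta> * weight c (kr_tree_at k r (copy_offset k r trunk_base i)))"
    by (intro sum.cong IH balanced_kr_tree_at_Suc_copies) simp_all
  thus ?thesis
    using IH[OF balanced_kr_tree_at_Suc_parts(3)]
    unfolding gain_kr_tree_at_Suc weight_kr_tree_at_Suc
    by (simp add: algebra_simps sum_distrib_left)
qed

end

lemma weight_kr_tree_at_Suc_le:
  assumes "k \<ge> 2" and bal: "balanced within_factor_two c (kr_tree_at k (Suc r) n)"
  shows "weight c (kr_tree_at k (Suc r) n) \<le> 3 ^ k * c (n + kr_size k r + 1)"
proof -
  obtain m where k: "k = Suc (Suc m)" using assms(1) by (rule ge_two_SucSucE)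
  note parts = balanced_kr_tree_at_Suc_parts[OF k bal]
  let ?trunk = "weight c (trunk_at k r (Suc m) (n + kr_size k r + 1))"
  have "weight c (kr_tree_at k (Suc r) n) \<le> 3 * ?trunk"
    using parts(1,2) by (simp add: kr_tree_at_Suc k within_factor_two_def)
  also have "\<dots> \<le> 3 * (3 ^ Suc m * c (n + kr_size k r + 1))"
    using weight_trunk_at_le[OF parts(4)] by simp
  finally show ?thesis by (simp add: k)
qed

lemma weight_kr_tree_at_Suc_eq:
  assumes "k \<ge> 2" and bal: "balanced (=) c (kr_tree_at k (Suc r) n)"
  shows "weight c (kr_tree_at k (Suc r) n) = 2 ^ k * c (n + kr_size k r + 1)"
proof -
  obtain m where k: "k = Suc (Suc m)" using assms(1) by (rule ge_two_SucSucE)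
  note parts = balanced_kr_tree_at_Suc_parts[OF k bal]
  show ?thesis
    using parts(1,2) weight_trunk_at_eq[OF parts(4)] by (simp add: kr_tree_at_Suc k)
qed

lemma bound_factor_three:
  fixes x w a :: real
  assumes "0 \<le> a" "w \<le> 3 ^ k * x"
  shows "k * (1 - a * (1 - 1 / 3 ^ k)) * w \<le> k * x + k * (1 - a) * (w - x)"
proof -
  have "w / 3 ^ k \<le> x" using assms(2) by (simp add: divide_le_eq mult.commute)
  hence "0 \<le> k * a * (x - w / 3 ^ k)" using assms(1) by simp
  also have "k * a * (x - w / 3 ^ k) = k * x + k * (1 - a) * (w - x) - k * (1 - a * (1 - 1 / 3 ^ k)) * w"
    by (simp add: field_simps)
  finally show ?thesis by simp
qed

lemma gain_Suc_ge_factor_two: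
  assumes "k \<ge> 2"
    and IH: "\<And>j. balanced within_factor_two c (kr_tree_at k r j) \<Longrightarrow>
               k * (1 - (1 - 1 / 3 ^ k) ^ r) * weight c (kr_tree_at k r j) \<le> gain k c r j"
    and bal: "balanced within_factor_two c (kr_tree_at k (Suc r) n)"
  shows "k * (1 - (1 - 1 / 3 ^ k) ^ Suc r) * weight c (kr_tree_at k (Suc r) n)
           + weight c (kr_tree_at k r (copy_offset k r (n + kr_size k r + 1) 0))
         \<le> gain k c (Suc r) n"
proof -
  obtain m where k: "k = Suc (Suc m)" using assms(1) by (rule ge_two_SucSucE)
  define a :: real where "a = (1 - 1 / 3 ^ k) ^ r"
  let ?w = "real (weight c (kr_tree_at k (Suc r) n))" and ?x = "real (c (n + kr_size k r + 1))"
  have "0 \<le> a" unfolding a_def by simp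
  moreover have "?w \<le> 3 ^ k * ?x"
    using of_nat_mono[OF weight_kr_tree_at_Suc_le[OF assms(1) bal], where 'a=real] by simp
  ultimately have "k * (1 - a * (1 - 1 / 3 ^ k)) * ?w \<le> k * ?x + k * (1 - a) * (?w - ?x)"
    by (rule bound_factor_three)
  moreover have "k * ?x + weight c (kr_tree_at k r (copy_offset k r (n + kr_size k r + 1) 0))
      + k * (1 - a) * (?w - ?x) \<le> gain k c (Suc r) n"
    using gain_kr_tree_at_Suc_ge[OF k bal IH] by (simp add: a_def)
  moreover have pow: "(1 - 1 / 3 ^ k) ^ Suc r = a * (1 - 1 / (3::real) ^ k)"
    unfolding a_def by (rule power_Suc2)
  ultimately show ?thesis unfolding pow by linarith
qed

lemma gain_ge_factor_two:
  assumes "k \<ge> 2" "balanced within_factor_two c (kr_tree_at k r n)"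
  shows "k * (1 - (1 - 1 / 3 ^ k) ^ r) * weight c (kr_tree_at k r n) \<le> gain k c r n"
  using assms(2)
proof (induction r arbitrary: n)
  case 0
  show ?case by (simp add: gain_0)
next
  case (Suc r)
  with gain_Suc_ge_factor_two[OF assms(1) Suc.IH Suc.prems] show ?case by simp
qed

lemma gain_gt_factor_two:
  assumes "k \<ge> 2" and bal: "balanced within_factor_two c (kr_tree_at k (Suc r) n)"
    and pos: "0 < weight c (kr_tree_at k (Suc r) n)"
  shows "k * (1 - (1 - 1 / 3 ^ k) ^ Suc r) * weight c (kr_tree_at k (Suc r) n) < gain k c (Suc r) n"
proof -
  obtain m where k: "k = Suc (Suc m)" using assms(1) by (rule ge_two_SucSucE)
  let ?b = "n + kr_size k r + 1"
  have "within_factor_two (c ?b) (weight c (kr_tree_at k r (copy_offset k r ?b 0)))"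
    using balanced_trunk_at_bottom[OF balanced_kr_tree_at_Suc_parts(4)[OF k bal]] by simp
  moreover have "0 < c ?b"
    using weight_kr_tree_at_Suc_le[OF assms(1) bal] pos by (auto intro: gr0I)
  ultimately have "0 < weight c (kr_tree_at k r (copy_offset k r ?b 0))"
    by (auto simp: within_factor_two_def)
  with gain_Suc_ge_factor_two[OF assms(1) gain_ge_factor_two[OF assms(1)] bal] show ?thesis
    by linarith
qed

lemma gain_eq_equal_weights:
  assumes "k \<ge> 2" "balanced (=) c (kr_tree_at k r n)"
  shows "gain k c r n = (k + 1) * (1 - (1 - 1 / 2 ^ k) ^ r) * weight c (kr_tree_at k r n)"
  using assms(2)
proof (induction r arbitrary: n)
  case 0
  show ?case by (simp add: gain_0)
next
  case (Suc r)
  obtain m where k: "k = Suc (Suc m)" using assms(1) by (rule ge_two_SucSucE)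
  define a :: real where "a = (1 - 1 / 2 ^ k) ^ r"
  let ?b = "n + kr_size k r + 1"
  let ?x = "real (c ?b)"
  have "c ?b = weight c (kr_tree_at k r (copy_offset k r ?b 0))"
    using balanced_trunk_at_bottom[OF balanced_kr_tree_at_Suc_parts(4)[OF k Suc.prems]] by simp
  moreover have "real (weight c (kr_tree_at k (Suc r) n)) = 2 ^ k * ?x"
    using weight_kr_tree_at_Suc_eq[OF assms(1) Suc.prems] by simp
  ultimately have "gain k c (Suc r) n = k * ?x + ?x + (k + 1) * (1 - a) * (2 ^ k * ?x - ?x)"
    using gain_kr_tree_at_Suc_eq[OF k Suc.prems Suc.IH] by (simp add: a_def)
  also have "\<dots> = (k + 1) * (1 - a * (1 - 1 / 2 ^ k)) * (2 ^ k * ?x)"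
    by (simp add: field_simps)
  also have "a * (1 - 1 / 2 ^ k) = (1 - 1 / 2 ^ k) ^ Suc r"
    unfolding a_def by (rule power_Suc2[symmetric])
  finally show ?case
    using weight_kr_tree_at_Suc_eq[OF assms(1) Suc.prems] by simp
qed

section \<open>Periodic sequences\<close>

lemma eq_if_mod_eq_window:
  fixes x y q :: nat
  assumes "x mod q = y mod q" "x \<le> y" "y < x + q"
  shows "x = y"
proof -
  have "q dvd y - x" using mod_eq_dvd_iff_nat[OF assms(2)] assms(1)[symmetric] by simp
  moreover have "y - x < q" using assms(2,3) by linarith
  ultimately have "\<not> 0 < y - x" using nat_dvd_not_less by blast
  thus ?thesis using assms(2) by simp
qed

lemma card_residue_window:
  fixes a q j :: nat
  assumes "j < q"
  shows "card {i. a \<le> i \<and> i < a + q \<and> i mod q = j} = 1"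
proof -
  define i0 where "i0 = a + (j + q - a mod q) mod q"
  have "i0 mod q = (a + (j + q - a mod q)) mod q"
    unfolding i0_def by (simp add: mod_add_right_eq)
  also have "\<dots> = (a mod q + (j + q - a mod q)) mod q"
    by (simp add: mod_add_left_eq)
  also have "a mod q + (j + q - a mod q) = j + q"
    using mod_less_divisor[of q a] assms by linarith
  also have "(j + q) mod q = j" using assms by simp
  finally have i0: "i0 mod q = j" .
  have window: "a \<le> i0" "i0 < a + q"
    using assms unfolding i0_def by simp_all
  have "i = i0" if "a \<le> i" "i < a + q" "i mod q = j" for i
  proof (cases "i \<le> i0")
    case True
    thus ?thesis using eq_if_mod_eq_window[of i q i0] that window i0 by linarith
  next
    case False
    thus ?thesis using eq_if_mod_eq_window[of i0 q i] that window i0 by linarith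
  qed
  hence "{i. a \<le> i \<and> i < a + q \<and> i mod q = j} = {i0}"
    using window i0 by blast
  thus ?thesis by simp
qed

lemma card_residue_interval:
  fixes a q j t :: nat
  assumes "j < q"
  shows "card {i. a \<le> i \<and> i < a + q * t \<and> i mod q = j} = t"
proof (induction t)
  case 0
  show ?case by simp
next
  case (Suc t)
  have "{i. a \<le> i \<and> i < a + q * Suc t \<and> i mod q = j}
      = {i. a \<le> i \<and> i < a + q * t \<and> i mod q = j}
        \<union> {i. a + q * t \<le> i \<and> i < a + q * t + q \<and> i mod q = j}"
    by auto
  also have "card \<dots> = t + 1"
    by (subst card_Un_disjoint) (auto simp: Suc card_residue_window[OF assms])
  finally show ?case by simp
qed

definition periodic :: "'a set list \<Rightarrow> 'a list \<Rightarrow> bool" where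
  "periodic Bs Y \<longleftrightarrow> (\<exists>p. \<forall>i<length Y. Y ! i \<in> Bs ! ((i + p) mod length Bs))"

lemma length_filter_periodic:
  assumes pat: "\<forall>i<length Y. Y ! i \<in> Bs ! ((i + p) mod length Bs)"
    and disj: "\<forall>i<length Bs. \<forall>j<length Bs. i \<noteq> j \<longrightarrow> Bs ! i \<inter> Bs ! j = {}"
    and j: "j < length Bs" and len: "length Y = length Bs * t"
  shows "length (filter (\<lambda>x. x \<in> Bs ! j) Y) = t"
proof -
  let ?q = "length Bs"
  have "{i. i < length Y \<and> Y ! i \<in> Bs ! j} = {i. i < length Y \<and> (i + p) mod ?q = j}"
  proof (intro Collect_cong iffI)
    fix i assume i: "i < length Y \<and> Y ! i \<in> Bs ! j"
    hence "Y ! i \<in> Bs ! ((i + p) mod ?q)" using pat by simp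
    moreover have "(i + p) mod ?q < ?q" using mod_less_divisor[of ?q "i + p"] j by linarith
    ultimately show "i < length Y \<and> (i + p) mod ?q = j" using disj j i by blast
  qed (use pat in auto)
  moreover have "(\<lambda>i. i + p) ` {i. i < ?q * t \<and> (i + p) mod ?q = j}
      = {m. p \<le> m \<and> m < p + ?q * t \<and> m mod ?q = j}"
  proof (intro equalityI subsetI)
    fix m assume "m \<in> {m. p \<le> m \<and> m < p + ?q * t \<and> m mod ?q = j}"
    hence "m - p \<in> {i. i < ?q * t \<and> (i + p) mod ?q = j}" "m = m - p + p" by auto
    thus "m \<in> (\<lambda>i. i + p) ` {i. i < ?q * t \<and> (i + p) mod ?q = j}" by (rule rev_image_eqI)
  qed auto
  hence "card {i. i < ?q * t \<and> (i + p) mod ?q = j} = t"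
    using card_image[of "\<lambda>i. i + p" "{i. i < ?q * t \<and> (i + p) mod ?q = j}"]
      card_residue_interval[OF j, of p t] by simp
  ultimately show ?thesis by (simp add: length_filter_conv_card len)
qed

lemma length_filter_rep: "length (filter P (rep m xs)) = m * length (filter P xs)"
  by (induction m) auto

lemma periodic_rep_share:
  assumes "periodic Bs (rep m Xs)"
    and disj: "\<forall>i<length Bs. \<forall>j<length Bs. i \<noteq> j \<longrightarrow> Bs ! i \<inter> Bs ! j = {}"
    and "length Bs dvd m" "0 < m" "j < length Bs"
  shows "length Bs * length (filter (\<lambda>x. x \<in> Bs ! j) Xs) = length Xs"
proof -
  let ?q = "length Bs"
  obtain p where p: "\<forall>i<length (rep m Xs). rep m Xs ! i \<in> Bs ! ((i + p) mod ?q)"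
    using assms(1) unfolding periodic_def by blast
  have "length (rep m Xs) = ?q * (m div ?q * length Xs)"
    using assms(3) by (simp add: length_concat sum_list_replicate)
  from length_filter_periodic[OF p disj assms(5) this]
  have "m * length (filter (\<lambda>x. x \<in> Bs ! j) Xs) = m div ?q * length Xs"
    by (simp add: length_filter_rep)
  hence "m * (?q * length (filter (\<lambda>x. x \<in> Bs ! j) Xs)) = ?q * (m div ?q) * length Xs"
    by (simp add: mult.left_commute)
  also have "?q * (m div ?q) = m" using assms(3) by simp
  finally show ?thesis using assms(4) by simp
qed

lemma periodic_if_alternating:
  assumes alt: "\<forall>i. Suc i < length Y \<longrightarrow>
                  (Y ! i \<in> L \<and> Y ! Suc i \<in> R) \<or> (Y ! i \<in> R \<and> Y ! Suc i \<in> L)"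
    and disj: "L \<inter> R = {}" and len: "2 \<le> length Y"
  shows "periodic [L, R] Y"
proof -
  define p :: nat where "p = (if Y ! 0 \<in> L then 0 else 1)"
  have "i < length Y \<longrightarrow> Y ! i \<in> [L, R] ! ((i + p) mod 2)" for i
  proof (induction i)
    case 0
    have "Y ! 0 \<in> L \<or> Y ! 0 \<in> R" using alt len by force
    thus ?case by (auto simp: p_def)
  next
    case (Suc i)
    show ?case
    proof
      assume i: "Suc i < length Y"
      hence "Y ! i \<in> [L, R] ! ((i + p) mod 2)" using Suc.IH by simp
      moreover have "(Y ! i \<in> L \<and> Y ! Suc i \<in> R) \<or> (Y ! i \<in> R \<and> Y ! Suc i \<in> L)"
        using alt i by blast
      moreover have "(Suc i + p) mod 2 = 1 - (i + p) mod 2" by presburger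
      ultimately show "Y ! Suc i \<in> [L, R] ! ((Suc i + p) mod 2)"
        using disj by (cases "(i + p) mod 2 = 0") auto
    qed
  qed
  hence "\<forall>i<length Y. Y ! i \<in> [L, R] ! ((i + p) mod length [L, R])"
    by (simp add: numeral_2_eq_2)
  thus ?thesis unfolding periodic_def by blast
qed

lemma cyclic3_iff_periodic: "cyclic3 Xs A0 A1 A2 \<longleftrightarrow> periodic [A0, A1, A2] Xs"
  by (simp add: cyclic3_def periodic_def)

section \<open>Stable sequences have balanced weights\<close>

lemma sum_count_list_eq_length_filter:
  "finite S \<Longrightarrow> (\<Sum>x\<in>S. count_list X x) = length (filter (\<lambda>x. x \<in> S) X)"
proof (induction X)
  case (Cons y X)
  have "(\<Sum>x\<in>S. count_list (y # X) x) = (\<Sum>x\<in>S. (if y = x then 1 else 0) + count_list X x)"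
    by (intro sum.cong) auto
  thus ?case using Cons by (simp add: sum.distrib sum.delta)
qed simp

lemma weight_count_list:
  "bst t \<Longrightarrow> weight (count_list X) t = length (filter (\<lambda>x. x \<in> set_tree t) X)"
  by (simp add: weight_eq_sum sum_count_list_eq_length_filter)

lemma length_filter_subseq_at:
  "S \<subseteq> set_tree v \<Longrightarrow>
     length (filter (\<lambda>x. x \<in> S) (subseq_at v X)) = length (filter (\<lambda>x. x \<in> S) X)"
  unfolding subseq_at_def by (simp add: filter_filter) (metis (mono_tags, lifting) filter_cong subsetD)

lemma subseq_at_rep: "subseq_at v (rep m X) = rep m (subseq_at v X)"
  by (simp add: subseq_at_def filter_concat)

lemma weight_share_if_periodic:
  fixes X :: "'a::linorder list"
  assumes per: "periodic (map set_tree us) (subseq_at v (rep m X))"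
    and disj: "\<forall>i<length us. \<forall>j<length us.
                 i \<noteq> j \<longrightarrow> set_tree (us ! i) \<inter> set_tree (us ! j) = {}"
    and subtrees: "\<forall>u\<in>set us. bst u \<and> set_tree u \<subseteq> set_tree v"
    and "length us dvd m" "0 < m" and u: "u \<in> set us"
  shows "length us * weight (count_list X) u = length (subseq_at v X)"
proof -
  obtain j where j: "j < length us" "u = us ! j" using u by (auto simp: in_set_conv_nth)
  have "length us * length (filter (\<lambda>x. x \<in> map set_tree us ! j) (subseq_at v X))
      = length (subseq_at v X)"
    using periodic_rep_share[of "map set_tree us" m "subseq_at v X" j] per disj assms(4,5) j(1)
    by (simp add: subseq_at_rep)
  thus ?thesis
    using subtrees u j weight_count_list length_filter_subseq_at by (metis nth_map)
qed

lemma balanced_node_if_strongly_stable: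
  fixes X :: "'a::linorder list"
  assumes b: "bst (Node l a r)" and st: "strongly_stable_node (Node l a r) (rep 6 X)"
  shows "count_list X a = 0 \<and> weight (count_list X) l = weight (count_list X) r"
proof -
  let ?v = "Node l a r" and ?c = "count_list X"
  have split: "length (subseq_at ?v X) = weight ?c l + ?c a + weight ?c r"
    using weight_count_list[OF b, of X] unfolding subseq_at_def by simp
  show ?thesis
  proof (cases "subseq_at ?v X = []")
    case True
    thus ?thesis using split by simp
  next
    case False
    have disj: "set_tree l \<inter> set_tree r = {}" using b by fastforce
    have "2 \<le> length (subseq_at ?v (rep 6 X))"
      using False by (simp add: subseq_at_rep length_concat sum_list_replicate Suc_leI)
    with st disj have per: "periodic (map set_tree [l, r]) (subseq_at ?v (rep 6 X))"
      unfolding strongly_stable_node_def Let_def by (simp add: periodic_if_alternating)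
    have disj2: "\<forall>i<length [l, r]. \<forall>j<length [l, r].
                   i \<noteq> j \<longrightarrow> set_tree ([l, r] ! i) \<inter> set_tree ([l, r] ! j) = {}"
      using disj by (auto simp: less_Suc_eq)
    have sub: "\<forall>u\<in>set [l, r]. bst u \<and> set_tree u \<subseteq> set_tree ?v" using b by auto
    have six: "(6::nat) = length [l, r] * 3" by simp
    have "2 * weight ?c u = length (subseq_at ?v X)" if "u \<in> set [l, r]" for u
      using weight_share_if_periodic[OF per disj2 sub dvdI[OF six] _ that] by simp
    from this[of l] this[of r] show ?thesis using split by simp
  qed
qed

lemma disjoint_if_separated:
  fixes c :: "'a::order"
  assumes "\<forall>x\<in>A. x < c" "\<forall>y\<in>B. c < y"
  shows "A \<inter> B = {}"
  using assms less_asym by blast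

lemma balanced_node_if_weakly_stable_left:
  fixes X :: "'a::linorder list"
  assumes bst: "bst (Node (Node ll b lr) a r)"
    and c3: "cyclic3 (subseq_at (Node (Node ll b lr) a r) (rep 6 X))
               (set_tree ll) (set_tree lr) (set_tree r)"
  shows "count_list X a = 0 \<and> weight (count_list X) (Node ll b lr) = 2 * weight (count_list X) r"
proof -
  let ?v = "Node (Node ll b lr) a r" and ?c = "count_list X"
  have split: "length (subseq_at ?v X) = weight ?c ll + ?c b + weight ?c lr + ?c a + weight ?c r"
    using weight_count_list[OF bst, of X] unfolding subseq_at_def by simp
  have per: "periodic (map set_tree [ll, lr, r]) (subseq_at ?v (rep 6 X))"
    using c3 by (simp add: cyclic3_iff_periodic)
  have "set_tree ll \<inter> set_tree lr = {}"
    using bst by (intro disjoint_if_separated[where c = b]) auto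
  moreover have "set_tree ll \<inter> set_tree r = {}" "set_tree lr \<inter> set_tree r = {}"
    using bst by (intro disjoint_if_separated[where c = a]; auto)+
  ultimately have disj: "\<forall>i<length [ll, lr, r]. \<forall>j<length [ll, lr, r]. i \<noteq> j \<longrightarrow>
      set_tree ([ll, lr, r] ! i) \<inter> set_tree ([ll, lr, r] ! j) = {}"
    by (auto simp: less_Suc_eq Int_commute)
  have sub: "\<forall>u\<in>set [ll, lr, r]. bst u \<and> set_tree u \<subseteq> set_tree ?v" using bst by auto
  have six: "(6::nat) = length [ll, lr, r] * 2" by simp
  have "3 * weight ?c u = length (subseq_at ?v X)" if "u \<in> set [ll, lr, r]" for u
    using weight_share_if_periodic[OF per disj sub dvdI[OF six] _ that] by simp
  from this[of ll] this[of lr] this[of r] show ?thesis using split by simp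
qed

lemma balanced_node_if_weakly_stable_right:
  fixes X :: "'a::linorder list"
  assumes bst: "bst (Node l a (Node rl b rr))"
    and c3: "cyclic3 (subseq_at (Node l a (Node rl b rr)) (rep 6 X))
               (set_tree rr) (set_tree rl) (set_tree l)"
  shows "count_list X a = 0 \<and> weight (count_list X) (Node rl b rr) = 2 * weight (count_list X) l"
proof -
  let ?v = "Node l a (Node rl b rr)" and ?c = "count_list X"
  have split: "length (subseq_at ?v X) = weight ?c l + ?c a + weight ?c rl + ?c b + weight ?c rr"
    using weight_count_list[OF bst, of X] unfolding subseq_at_def by simp
  have per: "periodic (map set_tree [rr, rl, l]) (subseq_at ?v (rep 6 X))"
    using c3 by (simp add: cyclic3_iff_periodic)
  have "set_tree rl \<inter> set_tree rr = {}"
    using bst by (intro disjoint_if_separated[where c = b]) auto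
  moreover have "set_tree l \<inter> set_tree rr = {}" "set_tree l \<inter> set_tree rl = {}"
    using bst by (intro disjoint_if_separated[where c = a]; auto)+
  ultimately have disj: "\<forall>i<length [rr, rl, l]. \<forall>j<length [rr, rl, l]. i \<noteq> j \<longrightarrow>
      set_tree ([rr, rl, l] ! i) \<inter> set_tree ([rr, rl, l] ! j) = {}"
    by (auto simp: less_Suc_eq Int_commute)
  have sub: "\<forall>u\<in>set [rr, rl, l]. bst u \<and> set_tree u \<subseteq> set_tree ?v" using bst by auto
  have six: "(6::nat) = length [rr, rl, l] * 2" by simp
  have "3 * weight ?c u = length (subseq_at ?v X)" if "u \<in> set [rr, rl, l]" for u
    using weight_share_if_periodic[OF per disj sub dvdI[OF six] _ that] by simp
  from this[of rr] this[of rl] this[of l] show ?thesis using split by simp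
qed

lemma bst_subtrees: "\<lbrakk> bst t; s \<in> subtrees t \<rbrakk> \<Longrightarrow> bst s"
  by (induction t) auto

lemma balanced_if_mixed_stable:
  fixes X :: "'a::linorder list"
  assumes bst: "bst t" and stable: "mixed_stable t (rep 6 X)"
  shows "balanced within_factor_two (count_list X) t"
  unfolding balanced_iff_inner_subtrees
proof (intro ballI impI)
  fix v assume v: "v \<in> subtrees t" "inner v"
  then obtain l a r where v_eq: "v = Node l a r" by (cases v) (auto simp: inner_def)
  have bst_v: "bst v" using bst_subtrees[OF bst v(1)] .
  let ?c = "count_list X"
  have "strongly_stable_node v (rep 6 X) \<or> weakly_stable_left_node v (rep 6 X)
        \<or> weakly_stable_right_node v (rep 6 X)"
    using stable v unfolding mixed_stable_def weakly_stable_node_def by blast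
  thus "?c (value v) = 0 \<and> within_factor_two (weight ?c (left v)) (weight ?c (right v))"
  proof (elim disjE)
    assume "strongly_stable_node v (rep 6 X)"
    thus ?thesis using balanced_node_if_strongly_stable bst_v
      by (auto simp: v_eq within_factor_two_def)
  next
    assume weak: "weakly_stable_left_node v (rep 6 X)"
    then obtain ll b lr where l: "l = Node ll b lr"
      unfolding weakly_stable_left_node_def inner_def v_eq by (cases l) auto
    have "?c a = 0 \<and> weight ?c l = 2 * weight ?c r"
      using balanced_node_if_weakly_stable_left[of ll b lr a r X] bst_v weak
      by (simp add: v_eq l weakly_stable_left_node_def)
    thus ?thesis by (simp add: v_eq within_factor_two_def)
  next
    assume weak: "weakly_stable_right_node v (rep 6 X)"
    then obtain rl b rr where r: "r = Node rl b rr"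
      unfolding weakly_stable_right_node_def inner_def v_eq by (cases r) auto
    have "?c a = 0 \<and> weight ?c r = 2 * weight ?c l"
      using balanced_node_if_weakly_stable_right[of l a rl b rr X] bst_v weak
      by (simp add: v_eq r weakly_stable_right_node_def)
    thus ?thesis by (simp add: v_eq within_factor_two_def)
  qed
qed

lemma balanced_if_strongly_stable:
  fixes X :: "'a::linorder list"
  assumes bst: "bst t" and stable: "strongly_stable t (rep 6 X)"
  shows "balanced (=) (count_list X) t"
  unfolding balanced_iff_inner_subtrees
proof (intro ballI impI)
  fix v assume v: "v \<in> subtrees t" "inner v"
  then obtain l a r where v_eq: "v = Node l a r" by (cases v) (auto simp: inner_def)
  have "strongly_stable_node v (rep 6 X)" using stable v unfolding strongly_stable_def by blast
  thus "count_list X (value v) = 0 \<and> weight (count_list X) (left v) = weight (count_list X) (right v)"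
    using balanced_node_if_strongly_stable bst_subtrees[OF bst v(1)] by (simp add: v_eq)
qed

lemma rep_rep: "rep a (rep b xs) = rep (a * b) xs"
  by (induction a) (auto simp: replicate_add)

lemma whole_multiple_of_atomic_rep:
  assumes "whole_multiple_of_atomic P X"
  shows "P (rep 6 X)" "X \<noteq> []"
proof -
  obtain A m where m: "m \<ge> 1" "is_atomic P X A" "X = rep m A"
    using assms unfolding whole_multiple_of_atomic_def by blast
  have "P (rep (6 * m) A)" "A \<noteq> []" using m(1,2) unfolding is_atomic_def by simp_all
  thus "P (rep 6 X)" "X \<noteq> []" using m(1,3) by (simp_all add: rep_rep)
qed

lemma avg_promotion_eq_weighted_depth:
  fixes X :: "'a::linorder list"
  assumes "bst t" "bst t'" "set_tree t' = set_tree t"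
  shows "avg_promotion t t' X
       = (real (weighted_depth (count_list X) t) - real (weighted_depth (count_list X) t'))
         / length X"
proof -
  let ?c = "count_list X"
  have "avg_promotion t t' X
      = (\<Sum>x\<in>set_tree t. (real (?c x * depth t x) - real (?c x * depth t' x)) / length X)"
    unfolding avg_promotion_def freq_def by (intro sum.cong) (auto simp: field_simps)
  also have "\<dots> = ((\<Sum>x\<in>set_tree t. real (?c x * depth t x))
                   - (\<Sum>x\<in>set_tree t. real (?c x * depth t' x))) / length X"
    by (simp add: sum_divide_distrib[symmetric] sum_subtractf)
  finally show ?thesis
    using weighted_depth_eq_sum[OF assms(1), of ?c] weighted_depth_eq_sum[OF assms(2), of ?c] assms(3)
    by simp
qed

lemma leaf_keys_subset_set_tree: "leaf_keys t \<subseteq> set_tree t"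
  by (induction t) auto

lemma weight_count_list_eq_length:
  fixes X :: "'a::linorder list"
  assumes "bst t" "set X \<subseteq> leaf_keys t"
  shows "weight (count_list X) t = length X"
proof -
  have "filter (\<lambda>x. x \<in> set_tree t) X = X"
    using assms(2) leaf_keys_subset_set_tree[of t] by (intro filter_True) blast
  thus ?thesis by (simp add: weight_count_list[OF assms(1)])
qed

theorem lemma8:
  fixes k r :: nat
  assumes "k \<ge> 2" and "r \<ge> 1"
  shows "(\<forall>X. mixed_stable (kr_tree k r) X \<and>
             whole_multiple_of_atomic (mixed_stable (kr_tree k r)) X \<longrightarrow>
           (\<exists>T'. bst T' \<and> set_tree T' = set_tree (kr_tree k r) \<and>
              avg_promotion (kr_tree k r) T' X > real k * (1 - (1 - 1 / 3 ^ k) ^ r)))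
       \<and> (\<forall>X. strongly_stable (kr_tree k r) X \<and>
             whole_multiple_of_atomic (strongly_stable (kr_tree k r)) X \<longrightarrow>
           (\<exists>T' \<delta>. bst T' \<and> set_tree T' = set_tree (kr_tree k r) \<and>
              0 \<le> \<delta> \<and> \<delta> < (1 - 1 / 2 ^ k) ^ r \<and>
              avg_promotion (kr_tree k r) T' X
                = real (k + 1) * (1 - (1 - 1 / 2 ^ k) ^ r) + \<delta>))"
proof -
  let ?T = "kr_tree_at k r 1" and ?T' = "promoted k r 1"
  have T: "kr_tree k r = ?T" by (simp add: kr_tree_def kr_tree_at_def)
  have bst: "bst ?T" "bst ?T'" and keys: "set_tree ?T' = set_tree ?T"
    using bst_kr_tree_at bst_promoted[OF assms(1)] set_promoted[OF assms(1)] by blast+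
  have avg: "avg_promotion ?T ?T' X = gain k (count_list X) r 1 / weight (count_list X) ?T"
    if "set X \<subseteq> leaf_keys ?T" for X :: "nat list"
    using avg_promotion_eq_weighted_depth[OF bst keys] weight_count_list_eq_length[OF bst(1) that]
    by (simp add: gain_def)
  obtain r' where r: "r = Suc r'" using assms(2) by (cases r) auto
  show ?thesis
    unfolding T
  proof (intro conjI allI impI)
    fix X assume "mixed_stable ?T X \<and> whole_multiple_of_atomic (mixed_stable ?T) X"
    hence X: "set X \<subseteq> leaf_keys ?T" "X \<noteq> []" and "mixed_stable ?T (rep 6 X)"
      using whole_multiple_of_atomic_rep unfolding mixed_stable_def by blast+
    hence "balanced within_factor_two (count_list X) ?T"
      using balanced_if_mixed_stable bst(1) by blast
    moreover have pos: "0 < weight (count_list X) ?T"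
      using weight_count_list_eq_length[OF bst(1) X(1)] X(2) by simp
    ultimately have "k * (1 - (1 - 1 / 3 ^ k) ^ r) * weight (count_list X) ?T < gain k (count_list X) r 1"
      unfolding r by (rule gain_gt_factor_two[OF assms(1)])
    hence "k * (1 - (1 - 1 / 3 ^ k) ^ r) < avg_promotion ?T ?T' X"
      using pos unfolding avg[OF X(1)] by (simp add: pos_less_divide_eq)
    thus "\<exists>T'. bst T' \<and> set_tree T' = set_tree ?T \<and>
        k * (1 - (1 - 1 / 3 ^ k) ^ r) < avg_promotion ?T T' X"
      using bst keys by blast
  next
    fix X assume "strongly_stable ?T X \<and> whole_multiple_of_atomic (strongly_stable ?T) X"
    hence X: "set X \<subseteq> leaf_keys ?T" "X \<noteq> []" and "strongly_stable ?T (rep 6 X)"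
      using whole_multiple_of_atomic_rep unfolding strongly_stable_def by blast+
    hence "balanced (=) (count_list X) ?T"
      using balanced_if_strongly_stable bst(1) by blast
    hence "avg_promotion ?T ?T' X = (k + 1) * (1 - (1 - 1 / 2 ^ k) ^ r) + 0"
      using avg[OF X(1)] gain_eq_equal_weights[OF assms(1)] weight_count_list_eq_length[OF bst(1) X(1)] X(2)
      by simp
    moreover have "(0::real) < (1 - 1 / 2 ^ k) ^ r" using assms(1) by simp
    ultimately show "\<exists>T' \<delta>. bst T' \<and> set_tree T' = set_tree ?T \<and>
        0 \<le> \<delta> \<and> \<delta> < (1 - 1 / 2 ^ k) ^ r
        \<and> avg_promotion ?T T' X = real (k + 1) * (1 - (1 - 1 / 2 ^ k) ^ r) + \<delta>"
      using bst keys by fastforce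
  qed
qed

end
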